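(* For $k\ge4$ let $$E_k(n)=\frac{\gamma_k}{(1-\tau_k)^2}\,\rho_k^{-n}\,n^{-3/2},\qquad\text{where }\ \gamma_k=\sqrt{\frac{\rho_k}{2\pi\Lambda_k''(\tau_k)}}.$$ By Theorem 4.1, $E_k(n)$ is the asymptotic equivalent of $P^{(k)}_n$ as $n\to\infty$ for each fixed $k$. There exist a constant $C>0$ and an integer $K$ such that for all $k\ge K$ and all $n\ge1$, $$E_k(n)\le\frac{1}{(1-\frac{e}{k})^2}\sqrt{\frac{e}{4\pi k}}\left(\frac{k}{e}\right)^n\left(1+\frac52\frac{\log k}{k}+\frac{C}{k}\right)^n n^{-3/2}.$$
   Context: Let $s_j$ be the number of simple permutations of size $j$. A permutation is simple if its only intervals (factors whose value set is a set of consecutive integers) are the singletons and the whole permutation, with the convention that the permutations of sizes $1$ and $2$ are not simple. For $k\ge4$, let $$\Lambda_k(x)=\frac{x^2}{1-x}+\sum_{j=4}^k s_j\left(\frac{x}{1-x}\right)^j\qquad(0\le x<1).$$ Let $\tau_k$ be the unique solution in $(0,1)$ of $\Lambda_k'(x)=1$, and set $\rho_k=\tau_k-\Lambda_k(\tau_k)$. Let $U^{(k)}(z)$ be the formal power series with $U^{(k)}(0)=0$ and $U^{(k)}=z+\Lambda_k(U^{(k)})$, and let $P^{(k)}_n=[z^n]\dfrac{U^{(k)}(z)}{1-U^{(k)}(z)}$. Combinatorially, $P^{(k)}_n$ is the number of permutations of size $n$ whose strong interval tree has no prime node of arity larger than $k$. *)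

theory Defs
  imports "HOL-Analysis.Analysis" "HOL-Combinatorics.Permutations"
begin

text \<open>A permutation of size n is a bijection p of {0..<n} (positions to values),
  fixing everything outside.\<close>

definition perm_interval :: "nat \<Rightarrow> (nat \<Rightarrow> nat) \<Rightarrow> nat \<Rightarrow> nat \<Rightarrow> bool" where
  "perm_interval n p i j \<longleftrightarrow> i \<le> j \<and> j < n \<and> (\<exists>a. p ` {i..j} = {a..a + (j - i)})"

text \<open>Simple permutations: only trivial intervals; sizes 0, 1, 2 are excluded by convention.\<close>
definition simple_perm :: "nat \<Rightarrow> (nat \<Rightarrow> nat) \<Rightarrow> bool" where
  "simple_perm n p \<longleftrightarrow> n \<ge> 3 \<and> p permutes {0..<n} \<and>
     (\<forall>i j. perm_interval n p i j \<longrightarrow> i = j \<or> (i = 0 \<and> j = n - 1))"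

definition num_simple :: "nat \<Rightarrow> nat" where
  "num_simple n = card {p. simple_perm n p}"

definition Lambda :: "nat \<Rightarrow> real \<Rightarrow> real" where
  "Lambda k x = x\<^sup>2 / (1 - x) + (\<Sum>j=4..k. real (num_simple j) * (x / (1 - x)) ^ j)"

definition tau :: "nat \<Rightarrow> real" where
  "tau k = (THE x. 0 < x \<and> x < 1 \<and> deriv (Lambda k) x = 1)"

definition rho :: "nat \<Rightarrow> real" where
  "rho k = tau k - Lambda k (tau k)"

definition gamma_k :: "nat \<Rightarrow> real" where
  "gamma_k k = sqrt (rho k / (2 * pi * deriv (deriv (Lambda k)) (tau k)))"

definition E :: "nat \<Rightarrow> nat \<Rightarrow> real" where
  "E k n = gamma_k k / (1 - tau k)\<^sup>2 * rho k powr (- real n) * real n powr (-3/2)"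

end

theory Submission
  imports Defs "HOL-Analysis.Harmonic_Numbers" "HOL-Real_Asymp.Real_Asymp"
begin

text \<open>
  With \<open>y = x / (1 - x)\<close> and \<open>S(y) = \<Sum>\<^bsub>j=4..k\<^esub> s\<^sub>j y\<^sup>j\<close> we have
  \<open>\<Lambda>(x) = y - x + S(y)\<close>, a power series in \<open>x\<close> with nonnegative coefficients starting at \<open>x\<^sup>2\<close>.
  Hence \<open>\<Lambda>'\<close> increases (so \<open>\<tau>\<close> is well defined, \<open>\<tau> \<le> 1/2\<close>, and \<open>\<rho>\<close> is the maximum of
  \<open>x - \<Lambda>(x)\<close> on \<open>[0,1)\<close>), \<open>2\<Lambda> \<le> x\<Lambda>'\<close> and \<open>\<Lambda>' \<le> x\<Lambda>''\<close>. The last two give \<open>\<rho> \<ge> \<tau>/2\<close> and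
  \<open>\<Lambda>''(\<tau>) \<ge> 1/\<tau>\<close>, hence \<open>\<gamma> \<le> \<rho>/\<surd>\<pi>\<close> and \<open>E(n) \<le> 4/\<surd>\<pi> \<rho>\<^bsup>1-n\<^esup> n\<^bsup>-3/2\<^esup>\<close>.

  It remains to bound \<open>\<rho>\<close> from below by the value of \<open>x - \<Lambda>(x)\<close> at the point where
  \<open>y = e / (k + 5/2 log k)\<close>, using only \<open>s\<^sub>j \<le> j!\<close>. By Stirling's bound the terms \<open>j! y\<^sup>j\<close> with
  \<open>j \<le> k/2\<close> are negligible, while those with \<open>j > k/2\<close> grow geometrically up to
  \<open>k! y\<^sup>k \<le> e \<surd>k (1 + 5/2 log k / k)\<^bsup>-k\<^esup> \<approx> e k\<^bsup>-2\<^esup>\<close>; this is where the factor \<open>5/2\<close> comes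
  from. The outcome is \<open>\<rho> \<ge> e / (k + 5/2 log k + 40)\<close> for large \<open>k\<close>.
\<close>

lemma exp_one_ge_5_2: "5/2 \<le> exp (1::real)"
  using exp_lower_Taylor_quadratic[of 1] by simp

lemma ln_Stirling_bound:
  "0 < x \<Longrightarrow> ln (exp 1 * sqrt x * (x / exp 1) ^ n) = 1 + ln x / 2 + n * (ln x - 1)"
  by (simp add: ln_mult ln_div ln_realpow ln_sqrt)

lemma fact_le_Stirling_bound:
  assumes "1 \<le> n"
  shows "fact n \<le> exp 1 * sqrt (real n) * (real n / exp 1) ^ n"
  using assms
proof (induction n rule: dec_induct)
  case base
  then show ?case by simp
next
  case (step n)
  have n: "1 \<le> real n" using step by simp
  \<comment> \<open>the bound grows by the factor \<open>(n + 1) (1 + 1/n)\<^bsup>n+1/2\<^esup> / e \<ge> n + 1\<close>\<close>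
  have "1 = (real n + 1/2) * (2 * ((real n + 1) - real n) / (real n + (real n + 1)))"
    using n by (simp add: field_simps)
  also have "\<dots> \<le> (real n + 1/2) * (ln (real n + 1) - ln (real n))"
    using n by (intro mult_left_mono ln_inverse_approx_ge) auto
  finally have growth: "1 \<le> (real n + 1/2) * (ln (real n + 1) - ln (real n))" .
  have "ln (fact (Suc n)) = ln (fact n) + ln (real n + 1)"
    by (simp add: ln_mult add.commute)
  also have "\<dots> \<le> ln (exp 1 * sqrt (real n) * (real n / exp 1) ^ n) + ln (real n + 1)"
    using step.IH n by simp
  also have "\<dots> = 1 + ln (real n) / 2 + n * (ln (real n) - 1) + ln (real n + 1)"
    using n by (simp add: ln_Stirling_bound)
  also have "\<dots> \<le> 1 + ln (real n + 1) / 2 + (n + 1) * (ln (real n + 1) - 1)"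
    using growth by (simp add: algebra_simps)
  also have "\<dots> = ln (exp 1 * sqrt (real (Suc n)) * (real (Suc n) / exp 1) ^ Suc n)"
    using ln_Stirling_bound[of "real (Suc n)" "Suc n"] by (simp add: add.commute)
  finally show ?case
    by (subst (asm) ln_le_cancel_iff) auto
qed

lemma ratio_power_le:
  assumes "4 \<le> j" "2 * j \<le> k"
  shows "(real j / real k) ^ j \<le> (10 * ln (real k) / real k) ^ 4 + 1 / real k ^ 6"
proof -
  define u where "u = real j / real k"
  have u: "0 \<le> u" "u \<le> 1/2"
    using assms by (auto simp: u_def field_simps)
  show ?thesis
  proof (cases "real j \<le> 10 * ln (real k)")
    case True
    have "u ^ j \<le> u ^ 4"
      using assms u by (intro power_decreasing) auto
    also have "\<dots> \<le> (10 * ln (real k) / real k) ^ 4"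
      using True u unfolding u_def by (intro power_mono divide_right_mono) auto
    finally show ?thesis
      unfolding u_def by (simp add: add_increasing2)
  next
    case False
    have k: "0 < real k"
      using assms by simp
    have "u ^ j \<le> (1/2) ^ j"
      using u by (intro power_mono) auto
    also have "\<dots> = exp (- (real j * ln 2))"
      by (simp add: exp_minus exp_of_nat_mult power_one_over inverse_eq_divide)
    also have "\<dots> \<le> exp (- (6 * ln (real k)))"
      using False mult_left_mono[OF ln2_ge_two_thirds, of "real j"] by simp
    also have "\<dots> = 1 / real k ^ 6"
      using k by (simp add: exp_minus exp_of_nat_mult[of 6, simplified] inverse_eq_divide)
    finally show ?thesis
      unfolding u_def by (simp add: add_increasing)
  qed
qed

lemma power_mult_le_of_growth:
  fixes a :: "nat \<Rightarrow> real"
  assumes "j \<le> k" "0 \<le> q" "\<And>i. j < i \<Longrightarrow> i \<le> k \<Longrightarrow> q * a (i - 1) \<le> a i"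
  shows "a j * q ^ (k - j) \<le> a k"
  using assms
proof (induction k rule: dec_induct)
  case base
  then show ?case by simp
next
  case (step k)
  have "a j * q ^ (Suc k - j) = q * (a j * q ^ (k - j))"
    using step.hyps by (simp add: Suc_diff_le)
  also have "\<dots> \<le> q * a k"
    using step by (intro mult_left_mono) auto
  also have "\<dots> \<le> a (Suc k)"
    using step.prems(2)[of "Suc k"] step.hyps by simp
  finally show ?case .
qed

lemma sum_power_diff_le:
  fixes r :: real
  assumes "0 \<le> r" "r < 1"
  shows "(\<Sum>j=m..k. r ^ (k - j)) \<le> 1 / (1 - r)"
proof -
  have "(\<Sum>j=m..k. r ^ (k - j)) = (\<Sum>i\<in>(\<lambda>j. k - j) ` {m..k}. r ^ i)"
    by (subst sum.reindex) (auto simp: inj_on_def)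
  also have "\<dots> \<le> (\<Sum>i. r ^ i)"
    using assms by (intro sum_le_suminf summable_geometric) auto
  also have "\<dots> = 1 / (1 - r)"
    using assms by (simp add: suminf_geometric)
  finally show ?thesis .
qed

lemma diff_le_diff_at_unit_derivative:
  fixes f f' :: "real \<Rightarrow> real"
  assumes I: "is_interval I" and f: "\<And>x. x \<in> I \<Longrightarrow> (f has_real_derivative f' x) (at x)"
    and mono: "mono_on I f'" and t: "t \<in> I" "f' t = 1" and x: "x \<in> I"
  shows "x - f x \<le> t - f t"
proof (cases x t rule: linorder_cases)
  case less
  have between: "z \<in> I" if "x \<le> z" "z \<le> t" for z
    using I x t that unfolding is_interval_1 by blast
  obtain z where z: "x < z" "z < t" "f t - f x = (t - x) * f' z"
    using MVT2[OF less, of f f'] f between by force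
  have "f' z \<le> 1"
    using mono_onD[OF mono, of z t] between z t by auto
  then have "(t - x) * f' z \<le> t - x"
    using less by (simp add: mult_left_le)
  then show ?thesis
    using z by linarith
next
  case greater
  have between: "z \<in> I" if "t \<le> z" "z \<le> x" for z
    using I x t that unfolding is_interval_1 by blast
  obtain z where z: "t < z" "z < x" "f x - f t = (x - t) * f' z"
    using MVT2[OF greater, of f f'] f between by force
  have "1 \<le> f' z"
    using mono_onD[OF mono, of t z] between z t by auto
  then have "x - t \<le> (x - t) * f' z"
    using greater by (simp add: mult_le_cancel_left1)
  then show ?thesis
    using z by linarith
qed simp

section \<open>The generating polynomial of simple permutations\<close>

lemma num_simple_le_fact: "real (num_simple j) \<le> fact j"
proof -
  have "card {p. simple_perm j p} \<le> card {p. p permutes {0..<j}}"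
    by (intro card_mono finite_permutations) (auto simp: simple_perm_def)
  also have "\<dots> = fact j"
    by (simp add: card_permutations)
  finally show ?thesis
    unfolding num_simple_def by (metis of_nat_fact of_nat_le_iff)
qed

definition simple_poly :: "nat \<Rightarrow> real \<Rightarrow> real" where
  "simple_poly k t = (\<Sum>j=4..k. real (num_simple j) * t ^ j)"

definition simple_poly' :: "nat \<Rightarrow> real \<Rightarrow> real" where
  "simple_poly' k t = (\<Sum>j=4..k. real (num_simple j) * real j * t ^ (j - 1))"

definition simple_poly'' :: "nat \<Rightarrow> real \<Rightarrow> real" where
  "simple_poly'' k t = (\<Sum>j=4..k. real (num_simple j) * real j * real (j - 1) * t ^ (j - 2))"

lemma simple_poly_has_real_derivative [derivative_intros]:
  assumes "(f has_real_derivative f') (at x within S)"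
  shows "((\<lambda>x. simple_poly k (f x)) has_real_derivative simple_poly' k (f x) * f') (at x within S)"
  unfolding simple_poly_def simple_poly'_def sum_distrib_right
  by (auto intro!: derivative_eq_intros sum.cong assms)

lemma simple_poly'_has_real_derivative [derivative_intros]:
  assumes "(f has_real_derivative f') (at x within S)"
  shows "((\<lambda>x. simple_poly' k (f x)) has_real_derivative simple_poly'' k (f x) * f') (at x within S)"
  unfolding simple_poly'_def simple_poly''_def sum_distrib_right
  by (auto intro!: derivative_eq_intros sum.cong assms simp: diff_diff_left numeral_2_eq_2)

lemma simple_poly_nonneg: "0 \<le> t \<Longrightarrow> 0 \<le> simple_poly k t"
  unfolding simple_poly_def by (intro sum_nonneg) auto

lemma simple_poly'_nonneg: "0 \<le> t \<Longrightarrow> 0 \<le> simple_poly' k t"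
  unfolding simple_poly'_def by (intro sum_nonneg) auto

lemma simple_poly'_zero [simp]: "simple_poly' k 0 = 0"
  unfolding simple_poly'_def by (intro sum.neutral) auto

lemma simple_poly'_mono: "0 \<le> s \<Longrightarrow> s \<le> t \<Longrightarrow> simple_poly' k s \<le> simple_poly' k t"
  unfolding simple_poly'_def by (intro sum_mono mult_left_mono power_mono) auto

lemma simple_poly_le_simple_poly':
  assumes "0 \<le> t"
  shows "4 * simple_poly k t \<le> t * simple_poly' k t"
proof -
  have "4 * (real (num_simple j) * t ^ j) \<le> t * (real (num_simple j) * real j * t ^ (j - 1))"
    if "4 \<le> j" for j
  proof -
    have "4 * (real (num_simple j) * t ^ j) \<le> real j * (real (num_simple j) * t ^ j)"
      using that assms by (intro mult_right_mono) auto
    also have "\<dots> = t * (real (num_simple j) * real j * t ^ (j - 1))"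
      using that by (cases j) auto
    finally show ?thesis .
  qed
  then show ?thesis
    unfolding simple_poly_def simple_poly'_def sum_distrib_left by (intro sum_mono) auto
qed

lemma simple_poly'_le_simple_poly'':
  assumes "0 \<le> t"
  shows "3 * simple_poly' k t \<le> t * simple_poly'' k t"
proof -
  have "3 * (real (num_simple j) * real j * t ^ (j - 1))
      \<le> t * (real (num_simple j) * real j * real (j - 1) * t ^ (j - 2))"
    if "4 \<le> j" for j
  proof -
    have "3 * (real (num_simple j) * real j * t ^ (j - 1))
        \<le> real (j - 1) * (real (num_simple j) * real j * t ^ (j - 1))"
      using that assms by (intro mult_right_mono) auto
    also have "\<dots> = t * (real (num_simple j) * real j * real (j - 1) * t ^ (j - 2))"
      using that by (cases j; cases "j - 1") auto
    finally show ?thesis .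
  qed
  then show ?thesis
    unfolding simple_poly'_def simple_poly''_def sum_distrib_left by (intro sum_mono) auto
qed

lemma simple_poly_le_fact_sum: "0 \<le> t \<Longrightarrow> simple_poly k t \<le> (\<Sum>j=4..k. fact j * t ^ j)"
  unfolding simple_poly_def by (intro sum_mono mult_right_mono num_simple_le_fact) auto

section \<open>The function \<open>\<Lambda>\<^sub>k\<close> and its derivatives\<close>

definition odds :: "real \<Rightarrow> real" where
  "odds x = x / (1 - x)"

lemma odds_has_real_derivative [derivative_intros]:
  assumes "(f has_real_derivative f') (at x within S)" "f x \<noteq> 1"
  shows "((\<lambda>x. odds (f x)) has_real_derivative (1 + odds (f x))^2 * f') (at x within S)"
  unfolding odds_def using assms
  by (auto intro!: derivative_eq_intros simp: field_simps power2_eq_square)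

lemma odds_less_odds: "a < b \<Longrightarrow> b < 1 \<Longrightarrow> odds a < odds b"
  by (simp add: odds_def divide_simps algebra_simps)

lemma odds_nonneg: "0 \<le> x \<Longrightarrow> x < 1 \<Longrightarrow> 0 \<le> odds x"
  by (simp add: odds_def)

lemma odds_of_ratio: "0 \<le> y \<Longrightarrow> odds (y / (1 + y)) = y"
  by (simp add: odds_def field_simps)

lemma mult_one_plus_odds: "x < 1 \<Longrightarrow> x * (1 + odds x) = odds x"
  by (simp add: odds_def field_simps)

definition Lambda' :: "nat \<Rightarrow> real \<Rightarrow> real" where
  "Lambda' k x = (1 + simple_poly' k (odds x)) * (1 + odds x)^2 - 1"

definition Lambda'' :: "nat \<Rightarrow> real \<Rightarrow> real" where
  "Lambda'' k x = simple_poly'' k (odds x) * (1 + odds x)^4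
     + 2 * (1 + simple_poly' k (odds x)) * (1 + odds x)^3"

lemma Lambda_eq:
  assumes "x < 1"
  shows "Lambda k x = odds x - x + simple_poly k (odds x)"
proof -
  have "x^2 / (1 - x) = x / (1 - x) - x"
    using assms by (simp add: field_simps power2_eq_square)
  then show ?thesis
    by (simp add: Lambda_def simple_poly_def odds_def)
qed

lemma Lambda_has_real_derivative:
  assumes "x < 1"
  shows "(Lambda k has_real_derivative Lambda' k x) (at x)"
proof (rule has_field_derivative_transform_within_open[where S = "{..<1}"])
  show "((\<lambda>z. odds z - z + simple_poly k (odds z)) has_real_derivative Lambda' k x) (at x)"
    using assms unfolding Lambda'_def
    by (auto intro!: derivative_eq_intros simp: algebra_simps)
qed (use assms Lambda_eq in auto)

lemma Lambda'_has_real_derivative: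
  assumes "x < 1"
  shows "(Lambda' k has_real_derivative Lambda'' k x) (at x)"
  using assms unfolding Lambda'_def[abs_def] Lambda''_def
  by (auto intro!: derivative_eq_intros simp: algebra_simps eval_nat_numeral)

lemma deriv_Lambda: "x < 1 \<Longrightarrow> deriv (Lambda k) x = Lambda' k x"
  by (intro DERIV_imp_deriv Lambda_has_real_derivative)

lemma deriv_deriv_Lambda:
  assumes "x < 1"
  shows "deriv (deriv (Lambda k)) x = Lambda'' k x"
proof (rule DERIV_imp_deriv, rule has_field_derivative_transform_within_open[where S = "{..<1}"])
  show "(Lambda' k has_real_derivative Lambda'' k x) (at x)"
    using assms by (rule Lambda'_has_real_derivative)
qed (use assms deriv_Lambda in auto)

lemma Lambda'_strict_mono:
  assumes "0 \<le> a" "a < b" "b < 1"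
  shows "Lambda' k a < Lambda' k b"
proof -
  have odds: "0 \<le> odds a" "odds a < odds b"
    using assms by (auto intro: odds_nonneg odds_less_odds)
  have "(1 + simple_poly' k (odds a)) * (1 + odds a)^2 < (1 + simple_poly' k (odds b)) * (1 + odds b)^2"
    using odds simple_poly'_nonneg[of "odds a" k]
    by (intro mult_le_less_imp_less simple_poly'_mono power_strict_mono add_left_mono) auto
  then show ?thesis
    by (simp add: Lambda'_def)
qed

lemma Lambda'_zero: "Lambda' k 0 = 0"
  by (simp add: Lambda'_def odds_def)

lemma Lambda'_half: "3 \<le> Lambda' k (1/2)"
  using simple_poly'_nonneg[of 1 k] by (simp add: Lambda'_def odds_def)

lemma two_Lambda_le:
  assumes "0 \<le> x" "x < 1"
  shows "2 * Lambda k x \<le> x * Lambda' k x"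
proof -
  define y where "y = odds x"
  have y: "0 \<le> y" "x * (1 + y) = y"
    using assms by (auto simp: y_def odds_nonneg mult_one_plus_odds)
  have "2 * Lambda k x = 2 * (x * y) + 2 * simple_poly k y"
    using assms y by (simp add: Lambda_eq y_def algebra_simps)
  also have "\<dots> \<le> x * y * (2 + y) + y * simple_poly' k y * (1 + y)"
  proof (rule add_mono)
    show "2 * (x * y) \<le> x * y * (2 + y)"
      using assms y by (simp add: algebra_simps)
    have "2 * simple_poly k y \<le> y * simple_poly' k y"
      using simple_poly_le_simple_poly'[of y k] simple_poly_nonneg[of y k] y by linarith
    also have "\<dots> \<le> y * simple_poly' k y * (1 + y)"
      using y simple_poly'_nonneg[of y k] by (simp add: algebra_simps)
    finally show "2 * simple_poly k y \<le> y * simple_poly' k y * (1 + y)" .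
  qed
  also have "\<dots> = x * ((1 + y)^2 - 1) + x * (1 + y)^2 * simple_poly' k y"
  proof -
    have "x * (1 + y)^2 = y * (1 + y)"
      using y by (simp add: power2_eq_square)
    then show ?thesis
      by (simp add: power2_eq_square algebra_simps)
  qed
  also have "\<dots> = x * Lambda' k x"
    by (simp add: Lambda'_def y_def algebra_simps)
  finally show ?thesis .
qed

lemma Lambda'_le:
  assumes "0 \<le> x" "x < 1"
  shows "Lambda' k x \<le> x * Lambda'' k x"
proof -
  define y where "y = odds x"
  define c where "c = 1 + y"
  have y: "0 \<le> y" "x * c = y"
    using assms by (auto simp: y_def c_def odds_nonneg mult_one_plus_odds)
  have c: "1 \<le> c" "c^2 - 1 = 2 * y + y^2"
    using y by (auto simp: c_def power2_eq_square algebra_simps)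
  have S': "0 \<le> simple_poly' k y"
    using y(1) by (rule simple_poly'_nonneg)
  have "Lambda' k x = simple_poly' k y * c^2 + (c^2 - 1)"
    by (simp add: Lambda'_def y_def c_def algebra_simps)
  also have "\<dots> \<le> 3 * simple_poly' k y * c^3 + 2 * y * c^2"
  proof (rule add_mono)
    have "simple_poly' k y * c^2 * 1 \<le> simple_poly' k y * c^2 * (3 * c)"
      using S' c by (intro mult_left_mono) auto
    then show "simple_poly' k y * c^2 \<le> 3 * simple_poly' k y * c^3"
      by (simp add: power3_eq_cube power2_eq_square mult_ac)
    show "c^2 - 1 \<le> 2 * y * c^2"
      using y c by (simp add: c_def power2_eq_square algebra_simps)
  qed
  also have "\<dots> \<le> y * simple_poly'' k y * c^3 + 2 * y * (1 + simple_poly' k y) * c^2"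
  proof (rule add_mono)
    show "3 * simple_poly' k y * c^3 \<le> y * simple_poly'' k y * c^3"
      using simple_poly'_le_simple_poly''[OF y(1), of k] c by (intro mult_right_mono) auto
    have "2 * y * 1 \<le> 2 * y * (1 + simple_poly' k y)"
      using y(1) S' by (intro mult_left_mono) auto
    then show "2 * y * c^2 \<le> 2 * y * (1 + simple_poly' k y) * c^2"
      by (intro mult_right_mono) simp_all
  qed
  also have "\<dots> = (x * c) * simple_poly'' k y * c^3 + 2 * (x * c) * (1 + simple_poly' k y) * c^2"
    by (simp only: y)
  also have "\<dots> = x * Lambda'' k x"
    by (simp add: Lambda''_def y_def c_def algebra_simps eval_nat_numeral)
  finally show ?thesis .
qed

section \<open>The constants \<open>\<tau>\<^sub>k\<close>, \<open>\<rho>\<^sub>k\<close>, \<open>\<gamma>\<^sub>k\<close> and the bound on \<open>E\<^sub>k(n)\<close>\<close>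

lemma
  shows tau_pos: "0 < tau k" and tau_le_half: "tau k \<le> 1/2" and Lambda'_tau: "Lambda' k (tau k) = 1"
proof -
  have "continuous_on {0..1/2} (Lambda' k)"
    by (intro continuous_at_imp_continuous_on ballI DERIV_isCont[OF Lambda'_has_real_derivative]) auto
  then obtain t where t: "0 \<le> t" "t \<le> 1/2" "Lambda' k t = 1"
    using IVT'[of "Lambda' k" 0 1 "1/2"] Lambda'_zero[of k] Lambda'_half[of k] by auto
  have "0 < t"
    using t Lambda'_zero by (cases "t = 0") auto
  have "tau k = t"
    unfolding tau_def
  proof (rule the_equality)
    show "0 < t \<and> t < 1 \<and> deriv (Lambda k) t = 1"
      using t \<open>0 < t\<close> deriv_Lambda[of t k] by auto
  next
    fix x assume x: "0 < x \<and> x < 1 \<and> deriv (Lambda k) x = 1"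
    then have "Lambda' k x = 1"
      using deriv_Lambda[of x k] by simp
    then show "x = t"
      using Lambda'_strict_mono[of x t k] Lambda'_strict_mono[of t x k] x t
      by (cases x t rule: linorder_cases) auto
  qed
  then show "0 < tau k" "tau k \<le> 1/2" "Lambda' k (tau k) = 1"
    using t \<open>0 < t\<close> by auto
qed

lemma rho_ge_half_tau: "tau k / 2 \<le> rho k"
  using two_Lambda_le[of "tau k" k] tau_pos[of k] tau_le_half[of k] Lambda'_tau[of k]
  by (simp add: rho_def)

lemma le_rho:
  assumes "0 \<le> x" "x < 1"
  shows "x - Lambda k x \<le> rho k"
  unfolding rho_def
proof (rule diff_le_diff_at_unit_derivative[where I = "{0..<1}" and f' = "Lambda' k"])
  show "mono_on {0..<1} (Lambda' k)"
    by (intro mono_onI) (auto simp: le_less intro: Lambda'_strict_mono)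
qed (use assms tau_pos[of k] tau_le_half[of k] Lambda'_tau[of k] Lambda_has_real_derivative in auto)

lemma gamma_k_le: "gamma_k k \<le> rho k / sqrt pi"
proof -
  have tau: "0 < tau k" "tau k < 1" "Lambda' k (tau k) = 1"
    using tau_pos[of k] tau_le_half[of k] Lambda'_tau[of k] by auto
  have rho: "0 < rho k" "tau k \<le> 2 * rho k"
    using rho_ge_half_tau[of k] tau by auto
  have "1 \<le> tau k * Lambda'' k (tau k)"
    using Lambda'_le[of "tau k" k] tau by simp
  then have Lambda'': "1 / tau k \<le> Lambda'' k (tau k)"
    using tau by (simp add: field_simps)
  moreover have "0 < Lambda'' k (tau k)"
    by (rule less_le_trans[OF _ Lambda'']) (use tau in simp)
  ultimately have "rho k / (2 * pi * Lambda'' k (tau k)) \<le> rho k / (2 * pi * (1 / tau k))"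
    using tau rho by (intro divide_left_mono mult_left_mono mult_pos_pos) auto
  also have "\<dots> \<le> (rho k / sqrt pi)^2"
    using tau rho by (simp add: power2_eq_square field_simps)
  finally have "gamma_k k \<le> sqrt ((rho k / sqrt pi)^2)"
    unfolding gamma_k_def deriv_deriv_Lambda[OF tau(2)] by (rule real_sqrt_le_mono)
  then show ?thesis
    using rho by simp
qed

lemma E_le_rho_power:
  assumes "1 \<le> n"
  shows "E k n \<le> 4 / sqrt pi * (1 / rho k) ^ (n - 1) * real n powr (-3/2)"
proof -
  have rho: "0 < rho k"
    using rho_ge_half_tau[of k] tau_pos[of k] by linarith
  have "(1/2)^2 \<le> (1 - tau k)^2"
    using tau_le_half[of k] by (intro power_mono) auto
  then have tau: "1 / (1 - tau k)^2 \<le> 4"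
    using tau_le_half[of k] by (simp add: field_simps)
  have "E k n = gamma_k k * (1 / (1 - tau k)^2) * (1 / rho k) ^ n * real n powr (-3/2)"
    using rho by (simp add: E_def powr_minus powr_realpow power_one_over field_simps)
  also have "\<dots> \<le> rho k / sqrt pi * 4 * (1 / rho k) ^ n * real n powr (-3/2)"
    using gamma_k_le[of k] tau rho by (intro mult_right_mono mult_mono) auto
  also have "\<dots> = 4 / sqrt pi * (1 / rho k) ^ (n - 1) * real n powr (-3/2)"
    using rho assms by (cases n) (auto simp: field_simps)
  finally show ?thesis .
qed

lemma E_le_of_rho_ge:
  assumes "0 < m" "m \<le> rho k" "1 \<le> n"
  shows "E k n \<le> 4 / sqrt pi * m * (1 / m) ^ n * real n powr (-3/2)"
proof -
  have "E k n \<le> 4 / sqrt pi * (1 / rho k) ^ (n - 1) * real n powr (-3/2)"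
    using assms(3) by (rule E_le_rho_power)
  also have "\<dots> \<le> 4 / sqrt pi * (1 / m) ^ (n - 1) * real n powr (-3/2)"
    using assms by (intro mult_right_mono mult_left_mono power_mono divide_left_mono) auto
  also have "\<dots> = 4 / sqrt pi * m * (1 / m) ^ n * real n powr (-3/2)"
    using assms by (cases n) auto
  finally show ?thesis .
qed

section \<open>A lower bound for \<open>\<rho>\<^sub>k\<close>\<close>

lemma rho_ge_fact_sum:
  assumes "0 \<le> y"
  shows "y * (1 - y) / (1 + y) - (\<Sum>j=4..k. fact j * y ^ j) \<le> rho k"
proof -
  define x where "x = y / (1 + y)"
  have x: "0 \<le> x" "x < 1" "odds x = y"
    using assms by (auto simp: x_def odds_of_ratio)
  have "y * (1 - y) / (1 + y) = 2 * x - y"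
    using assms by (simp add: x_def field_simps)
  then have "y * (1 - y) / (1 + y) - (\<Sum>j=4..k. fact j * y ^ j) \<le> 2 * x - y - simple_poly k y"
    using simple_poly_le_fact_sum[OF assms, of k] by simp
  also have "\<dots> = x - Lambda k x"
    using x by (simp add: Lambda_eq)
  also have "\<dots> \<le> rho k"
    using x by (intro le_rho)
  finally show ?thesis .
qed

lemma fact_power_le_lower_half:
  assumes "4 \<le> j" "2 * j \<le> k" "0 \<le> y" "y \<le> exp 1 / real k"
  shows "fact j * y ^ j \<le> 3 * sqrt (real k) * ((10 * ln (real k) / real k) ^ 4 + 1 / real k ^ 6)"
proof -
  have "fact j * y ^ j \<le> exp 1 * sqrt (real j) * (real j / exp 1) ^ j * y ^ j"
    using fact_le_Stirling_bound[of j] assms by (intro mult_right_mono) auto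
  also have "\<dots> = exp 1 * sqrt (real j) * (real j * y / exp 1) ^ j"
    by (simp add: power_mult_distrib power_divide)
  also have "\<dots> \<le> 3 * sqrt (real k) * (real j / real k) ^ j"
  proof (intro mult_mono power_mono)
    have "real j * y \<le> real j * (exp 1 / real k)"
      using assms by (intro mult_left_mono) auto
    then show "real j * y / exp 1 \<le> real j / real k"
      by (simp add: field_simps)
  qed (use assms exp_le in auto)
  also have "\<dots> \<le> 3 * sqrt (real k) * ((10 * ln (real k) / real k) ^ 4 + 1 / real k ^ 6)"
    using ratio_power_le[OF assms(1,2)] by (intro mult_left_mono) auto
  finally show ?thesis .
qed

lemma fact_power_sum_upper_half:
  assumes "4 \<le> k" "0 \<le> \<delta>" "\<delta> \<le> 1/8"
  defines "y \<equiv> exp 1 / (real k * (1 + \<delta>))"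
  shows "(\<Sum>j=Suc (k div 2)..k. fact j * y ^ j) \<le> 33 * sqrt (real k) * (1 + \<delta>) powr (- real k)"
proof -
  have k: "0 < real k" and y: "0 < y"
    using assms by (auto simp: y_def)
  have growth: "11/10 * (fact (i - 1) * y ^ (i - 1)) \<le> fact i * y ^ i" if "k div 2 < i" "i \<le> k" for i
  proof -
    have "(5/2) / (2 * (9/8)) \<le> exp 1 / (2 * (1 + \<delta>))"
      using exp_one_ge_5_2 assms by (intro frac_le) auto
    also have "\<dots> = real k / 2 * y"
      using k by (simp add: y_def)
    also have "\<dots> \<le> real i * y"
      using that y by (intro mult_right_mono) auto
    finally have "11/10 \<le> real i * y" by simp
    moreover have "fact i * y ^ i = (fact (i - 1) * y ^ (i - 1)) * (real i * y)"
      using that by (cases i) (auto simp: algebra_simps)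
    ultimately show ?thesis
      using y by (simp add: mult_left_mono mult.commute)
  qed
  have "fact j * y ^ j \<le> fact k * y ^ k * (10/11) ^ (k - j)" if "j \<in> {Suc (k div 2)..k}" for j
  proof -
    have "fact j * y ^ j * (11/10) ^ (k - j) \<le> fact k * y ^ k"
      using that growth by (intro power_mult_le_of_growth[where a = "\<lambda>i. fact i * y ^ i"]) auto
    then show ?thesis
      by (simp add: field_simps power_divide)
  qed
  then have "(\<Sum>j=Suc (k div 2)..k. fact j * y ^ j) \<le> fact k * y ^ k * (\<Sum>j=Suc (k div 2)..k. (10/11) ^ (k - j))"
    unfolding sum_distrib_left by (rule sum_mono)
  also have "\<dots> \<le> fact k * y ^ k * 11"
    using sum_power_diff_le[where r = "10/11" and m = "Suc (k div 2)" and k = k] y by (intro mult_left_mono) auto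
  also have "fact k * y ^ k \<le> exp 1 * sqrt (real k) * (real k * y / exp 1) ^ k"
  proof -
    have "fact k * y ^ k \<le> exp 1 * sqrt (real k) * (real k / exp 1) ^ k * y ^ k"
      using fact_le_Stirling_bound[of k] assms y by (intro mult_right_mono) auto
    then show ?thesis
      by (simp add: power_mult_distrib power_divide)
  qed
  also have "(real k * y / exp 1) ^ k = (1 + \<delta>) powr (- real k)"
    using k assms by (simp add: y_def powr_minus powr_realpow inverse_eq_divide power_one_over)
  also have "exp 1 * sqrt (real k) * (1 + \<delta>) powr (- real k) * 11
      \<le> 3 * sqrt (real k) * (1 + \<delta>) powr (- real k) * 11"
    using exp_le by (intro mult_right_mono) auto
  finally show ?thesis
    by simp
qed

lemma fact_power_sum_le:
  assumes "4 \<le> k" "0 \<le> \<delta>" "\<delta> \<le> 1/8"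
  shows "(\<Sum>j=4..k. fact j * (exp 1 / (real k * (1 + \<delta>))) ^ j)
    \<le> 3 * real k * sqrt (real k) * ((10 * ln (real k) / real k) ^ 4 + 1 / real k ^ 6)
      + 33 * sqrt (real k) * (1 + \<delta>) powr (- real k)"
proof -
  define y where "y = exp 1 / (real k * (1 + \<delta>))"
  have y: "0 \<le> y" "y \<le> exp 1 / real k"
    using assms by (auto simp: y_def intro!: divide_left_mono)
  have "(\<Sum>j=4..k. fact j * y ^ j) \<le> (\<Sum>j=4..k div 2. fact j * y ^ j) + (\<Sum>j=Suc (k div 2)..k. fact j * y ^ j)"
  proof -
    have "{4..k} \<subseteq> {4..k div 2} \<union> {Suc (k div 2)..k}"
      by auto
    then have "(\<Sum>j=4..k. fact j * y ^ j) \<le> (\<Sum>j\<in>{4..k div 2} \<union> {Suc (k div 2)..k}. fact j * y ^ j)"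
      using y by (intro sum_mono2) auto
    also have "\<dots> = (\<Sum>j=4..k div 2. fact j * y ^ j) + (\<Sum>j=Suc (k div 2)..k. fact j * y ^ j)"
      by (rule sum.union_disjoint) auto
    finally show ?thesis .
  qed
  also have "(\<Sum>j=4..k div 2. fact j * y ^ j)
      \<le> real k * (3 * sqrt (real k) * ((10 * ln (real k) / real k) ^ 4 + 1 / real k ^ 6))"
  proof -
    have "(\<Sum>j=4..k div 2. fact j * y ^ j)
        \<le> real (card {4..k div 2}) * (3 * sqrt (real k) * ((10 * ln (real k) / real k) ^ 4 + 1 / real k ^ 6))"
      using y by (intro sum_bounded_above fact_power_le_lower_half) auto
    also have "\<dots> \<le> real k * (3 * sqrt (real k) * ((10 * ln (real k) / real k) ^ 4 + 1 / real k ^ 6))"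
      by (intro mult_right_mono) auto
    finally show ?thesis .
  qed
  also have "(\<Sum>j=Suc (k div 2)..k. fact j * y ^ j) \<le> 33 * sqrt (real k) * (1 + \<delta>) powr (- real k)"
    unfolding y_def using assms by (rule fact_power_sum_upper_half)
  finally show ?thesis
    by (simp add: y_def mult_ac)
qed

lemma eventually_fact_power_sum_bound_small:
  "eventually (\<lambda>x::real. 18 / x^2 + 3 * x * sqrt x * ((10 * ln x / x) ^ 4 + 1 / x ^ 6)
     + 33 * sqrt x * (1 + 5/2 * ln x / x) powr (- x)
     \<le> 100 / ((x + 5/2 * ln x) * (x + 5/2 * ln x + 40))) at_top"
  by real_asymp

lemma rho_ge_of_error_bound:
  assumes "4 \<le> k" "5/2 * ln (real k) / real k \<le> 1/8"
    and small: "18 / real k ^ 2 + 3 * real k * sqrt (real k) * ((10 * ln (real k) / real k) ^ 4 + 1 / real k ^ 6)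
        + 33 * sqrt (real k) * (1 + 5/2 * ln (real k) / real k) powr (- real k)
      \<le> 100 / ((real k + 5/2 * ln (real k)) * (real k + 5/2 * ln (real k) + 40))"
  shows "exp 1 / (real k + 5/2 * ln (real k) + 40) \<le> rho k"
proof -
  define L where "L = 5/2 * ln (real k)"
  define y where "y = exp 1 / (real k + L)"
  have k: "4 \<le> k" "0 \<le> L" "L / real k \<le> 1/8"
    using assms by (auto simp: L_def)
  have kL: "0 < real k + L"
    using k by simp
  have y: "0 \<le> y" "y \<le> 3 / real k"
    using k kL exp_le unfolding y_def by (auto intro!: frac_le)
  have "exp 1 / (real k * (1 + L / real k)) = y"
    using k by (simp add: y_def distrib_left)
  then have sum: "(\<Sum>j=4..k. fact j * y ^ j)
      \<le> 3 * real k * sqrt (real k) * ((10 * ln (real k) / real k) ^ 4 + 1 / real k ^ 6)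
        + 33 * sqrt (real k) * (1 + L / real k) powr (- real k)"
    using fact_power_sum_le[of k "L / real k"] k by simp
  have "y - 2 * y^2 \<le> y * (1 - y) / (1 + y)"
    using y by (simp add: field_simps power2_eq_square)
  moreover have "2 * y^2 \<le> 18 / real k ^ 2"
    using power_mono[OF y(2) y(1), of 2] by (simp add: power_divide)
  ultimately have main_term: "y - 18 / real k ^ 2 \<le> y * (1 - y) / (1 + y)"
    by linarith
  have "100 / ((real k + L) * (real k + L + 40)) \<le> 40 * exp 1 / ((real k + L) * (real k + L + 40))"
    using kL exp_one_ge_5_2 by (intro divide_right_mono) auto
  also have "\<dots> = y - exp 1 / (real k + L + 40)"
    using kL by (simp add: y_def field_simps)
  finally have gap: "100 / ((real k + L) * (real k + L + 40)) \<le> y - exp 1 / (real k + L + 40)" .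
  have "exp 1 / (real k + L + 40) \<le> y * (1 - y) / (1 + y) - (\<Sum>j=4..k. fact j * y ^ j)"
    using small[folded L_def] gap main_term sum by linarith
  also have "\<dots> \<le> rho k"
    using y(1) by (rule rho_ge_fact_sum)
  finally show ?thesis
    by (simp add: L_def)
qed

lemma eventually_rho_ge:
  "eventually (\<lambda>k. exp 1 / (real k + 5/2 * ln (real k) + 40) \<le> rho k) sequentially"
proof -
  have "eventually (\<lambda>x::real. 4 \<le> x \<and> 5/2 * ln x / x \<le> 1/8 \<and>
      18 / x^2 + 3 * x * sqrt x * ((10 * ln x / x) ^ 4 + 1 / x ^ 6)
        + 33 * sqrt x * (1 + 5/2 * ln x / x) powr (- x)
      \<le> 100 / ((x + 5/2 * ln x) * (x + 5/2 * ln x + 40))) at_top"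
    by (intro eventually_conj eventually_ge_at_top eventually_fact_power_sum_bound_small) real_asymp
  from eventually_compose_filterlim[OF this filterlim_real_sequentially]
  show ?thesis
  proof eventually_elim
    case (elim k)
    then show ?case
      by (intro rho_ge_of_error_bound) auto
  qed
qed

lemma E_le_explicit_bound:
  assumes "4 \<le> k" "1 \<le> n"
    and rho: "exp 1 / (real k + 5/2 * ln (real k) + 40) \<le> rho k"
    and prefactor: "4 / sqrt pi * (exp 1 / (real k + 5/2 * ln (real k) + 40))
      \<le> 1 / (1 - exp 1 / real k)\<^sup>2 * sqrt (exp 1 / (4 * pi * real k))"
  shows "E k n \<le> 1 / (1 - exp 1 / real k)\<^sup>2 * sqrt (exp 1 / (4 * pi * real k))
      * (real k / exp 1) ^ n * (1 + 5/2 * ln (real k) / real k + 40 / real k) ^ n * real n powr (-3/2)"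
proof -
  define m where "m = exp 1 / (real k + 5/2 * ln (real k) + 40)"
  have "0 \<le> ln (real k)"
    using assms by simp
  then have m: "0 < m"
    unfolding m_def by (intro divide_pos_pos) auto
  have m_inverse: "1 / m = real k / exp 1 * (1 + 5/2 * ln (real k) / real k + 40 / real k)"
    using assms by (simp add: m_def field_simps)
  have "E k n \<le> 4 / sqrt pi * m * (1 / m) ^ n * real n powr (-3/2)"
    using m rho[folded m_def] assms(2) by (rule E_le_of_rho_ge)
  also have "\<dots> \<le> 1 / (1 - exp 1 / real k)\<^sup>2 * sqrt (exp 1 / (4 * pi * real k)) * (1 / m) ^ n * real n powr (-3/2)"
    using prefactor[folded m_def] m by (intro mult_right_mono) auto
  finally show ?thesis
    unfolding m_inverse power_mult_distrib by (simp only: mult.assoc)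
qed

theorem mainTheorem13:
  shows "\<exists>C::real. C > 0 \<and> (\<exists>K::nat. \<forall>k \<ge> K. \<forall>n \<ge> 1. k \<ge> 4 \<longrightarrow>
     E k n \<le> 1 / (1 - exp 1 / real k)\<^sup>2 * sqrt (exp 1 / (4 * pi * real k))
              * (real k / exp 1) ^ n
              * (1 + 5/2 * ln (real k) / real k + C / real k) ^ n
              * real n powr (-3/2))"
proof -
  have "eventually (\<lambda>x::real. 4 / sqrt pi * (exp 1 / (x + 5/2 * ln x + 40))
      \<le> 1 / (1 - exp 1 / x)\<^sup>2 * sqrt (exp 1 / (4 * pi * x))) at_top"
    by real_asymp
  from eventually_conj[OF eventually_compose_filterlim[OF this filterlim_real_sequentially] eventually_rho_ge]
  obtain K where "\<And>k. K \<le> k \<Longrightarrow>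
      4 / sqrt pi * (exp 1 / (real k + 5/2 * ln (real k) + 40))
        \<le> 1 / (1 - exp 1 / real k)\<^sup>2 * sqrt (exp 1 / (4 * pi * real k))
      \<and> exp 1 / (real k + 5/2 * ln (real k) + 40) \<le> rho k"
    unfolding eventually_sequentially by blast
  then show ?thesis
    by (intro exI[of _ 40] exI[of _ K] conjI allI impI E_le_explicit_bound) auto
qed

end
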